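(* Consider CAV $i$ subject to both the rear-end constraint with respect to $i_p$ and the safe-merging constraint with respect to $i-1$, as in the context, under (A1), (SA), (A3) and (A4). Assume $v_i\ge0$ at all times and $u_{\min}\le0$. Suppose that at each sampling time $t$ the applied control on $[t,t+\Delta t)$ is a feasible point of QP$_{12}(t)$ whenever QP$_{12}(t)$ is feasible. Then QP$_{12}(t_i^0+k\Delta t)$ is feasible for every integer $k\ge0$ with $[t_i^0+k\Delta t,\,t_i^0+(k+1)\Delta t]\subset[t_i^0,t_i^m]$.
   Context: **Vehicle model and times.** The vehicle dynamics are $\dot x_i=v_i$ and $\dot v_i=u_i$, where $x_i\in[0,L]$ is the distance travelled by CAV $i$ from its road's origin, $v_i$ its speed and $u_i$ its acceleration (the control). The merging point is at position $L>0$. CAV $i$ enters at time $t_i^0$ and reaches the merging point at time $t_i^m$. **Other vehicles.** CAV $i_p$ physically precedes $i$ on the same road, with position $x_{i_p}$, speed $v_{i_p}$ and acceleration $u_{i_p}$. CAV $i-1$ immediately precedes $i$ in first-in-first-out crossing order on the other road, with $x_{i-1}$, $v_{i-1}$ and $u_{i-1}$. All of these quantities are known to CAV $i$. **Constants and control bounds.** Let $z_{i,i_p}=x_{i_p}-x_i$ and $z_{i,i-1}=x_{i-1}-x_i$. The constants are $\varphi>0$, $\delta$, $k_1>0$, $k_2>0$, and $\varphi_2=\varphi/L$. Control bounds are $u_{\min}\le u_i\le u_{i,\max}$ with $u_{\min}<0<u_{i,\max}$. **(A1) Common minimum acceleration.** All CAVs share the minimum acceleration $u_{\min}$, so $u_{i_p}\ge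 u_{\min}$ and $u_{i-1}\ge u_{\min}$ at all times. **Rear-end functions:** - $b_1=z_{i,i_p}-\varphi v_i-\delta$. - $b_{\mathrm{cbf}_1}(u_i)=v_{i_p}-v_i-\varphi u_i+k_1b_1$. - $b_{F,1}=v_{i_p}-v_i+k_1b_1-\varphi u_{\min}$. - $b_{\eta_1}=v_{i_p}-v_i-\varphi u_{\min}$. - $\eta_1(u_i)=u_{i_p}-u_i+k_1b_{\eta_1}$. **Merging functions:** - $b_2=z_{i,i-1}-\varphi_2x_iv_i-\delta$. - $b_{\mathrm{cbf}_2}(u_i)=v_{i-1}-v_i-\varphi_2v_i^2-\varphi_2x_iu_i+k_2b_2$. - $b_{F,2}=v_{i-1}-v_i-\varphi_2v_i^2+k_2b_2-\varphi_2x_iu_{\min}$. - $b_{\eta_2}=v_{i-1}-v_i-\varphi_2v_i^2-\varphi_2x_iu_{\min}$. - $\eta_2(u_i)=u_{i-1}-u_i-2\varphi_2v_iu_i-\varphi_2v_iu_{\min}+k_2b_{\eta_2}$. Note that $\eta_j=\dot b_{\eta_j}+k_jb_{\eta_j}$ and $\dot b_{F,j}+k_jb_{F,j}=\eta_j+k_jb_{\mathrm{cbf}_j}$ for $j=1,2$. **QP$_{12}(t)$.** QP$_{12}(t)$ minimizes $\beta e_i^2+\tfrac12(u_i-u_{\mathrm{ref}}(t))^2$ over $(u_i,e_i)$ subject to: - $b_{\mathrm{cbf}_1}\ge0$ and $b_{\mathrm{cbf}_2}\ge0$, - $u_{\min}\le u_i\le u_{i,\max}$, - $\eta_1\ge0$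 and $\eta_2\ge0$, - a control Lyapunov constraint $c_1(t)+c_2(t)u_i\le e_i$ with free slack variable $e_i$. All quantities are evaluated at $t$. "Feasible" means the constraint set is nonempty. **(SA) Sampling / forward invariance.** The control is held constant on each $[t,t+\Delta t)$, and $\Delta t$ is small enough that for $b\in\{b_1,b_{F,1},b_{\eta_1}\}$ with gain $k=k_1$, and for $b\in\{b_2,b_{F,2},b_{\eta_2}\}$ with gain $k=k_2$: if $b(t)\ge0$ and $\dot b(t)+kb(t)\ge0$ under the applied controls, then $b(t+\Delta t)\ge0$. **(A3) Rear-end initial conditions.** $b_1(t_i^0)\ge0$, $b_{F,1}(t_i^0)\ge0$ and $b_{\eta_1}(t_i^0)\ge0$. **(A4) Merging initial conditions.** $b_2(t_i^0)\ge0$, $b_{F,2}(t_i^0)\ge0$ and $b_{\eta_2}(t_i^0)\ge0$. *)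

theory Defs
  imports "HOL-Analysis.Analysis"
begin

text \<open>All functions below take the instantaneous values (at some time t) of the
states / accelerations.  Naming: x v u = ego CAV i; xp vp up = CAV i_p
(physical predecessor, same road); xm vm um = CAV i-1 (FIFO predecessor,
other road).  phi2 = phi / L.\<close>

definition b1 :: "real \<Rightarrow> real \<Rightarrow> real \<Rightarrow> real \<Rightarrow> real \<Rightarrow> real" where
  "b1 phi delta xp x v = (xp - x) - phi * v - delta"

definition bcbf1 :: "real \<Rightarrow> real \<Rightarrow> real \<Rightarrow> real \<Rightarrow> real \<Rightarrow> real \<Rightarrow> real \<Rightarrow> real \<Rightarrow> real" where
  "bcbf1 phi delta k1 xp vp x v u = vp - v - phi * u + k1 * b1 phi delta xp x v"

definition bF1 :: "real \<Rightarrow> real \<Rightarrow> real \<Rightarrow> real \<Rightarrow> real \<Rightarrow> real \<Rightarrow> real \<Rightarrow> real \<Rightarrow> real" where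
  "bF1 phi delta k1 umin xp vp x v = vp - v + k1 * b1 phi delta xp x v - phi * umin"

definition beta1 :: "real \<Rightarrow> real \<Rightarrow> real \<Rightarrow> real \<Rightarrow> real" where
  "beta1 phi umin vp v = vp - v - phi * umin"

definition eta1 :: "real \<Rightarrow> real \<Rightarrow> real \<Rightarrow> real \<Rightarrow> real \<Rightarrow> real \<Rightarrow> real \<Rightarrow> real" where
  "eta1 phi k1 umin up vp v u = up - u + k1 * beta1 phi umin vp v"

(* time derivatives along the dynamics x'=v, v'=u (applied controls u, up) *)
definition db1 :: "real \<Rightarrow> real \<Rightarrow> real \<Rightarrow> real \<Rightarrow> real" where
  "db1 phi vp v u = vp - v - phi * u"

definition dbF1 :: "real \<Rightarrow> real \<Rightarrow> real \<Rightarrow> real \<Rightarrow> real \<Rightarrow> real \<Rightarrow> real" where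
  "dbF1 phi k1 up vp v u = up - u + k1 * (vp - v - phi * u)"

definition dbeta1 :: "real \<Rightarrow> real \<Rightarrow> real" where
  "dbeta1 up u = up - u"

definition b2 :: "real \<Rightarrow> real \<Rightarrow> real \<Rightarrow> real \<Rightarrow> real \<Rightarrow> real \<Rightarrow> real" where
  "b2 phi L delta xm x v = (xm - x) - (phi / L) * x * v - delta"

definition bcbf2 :: "real \<Rightarrow> real \<Rightarrow> real \<Rightarrow> real \<Rightarrow> real \<Rightarrow> real \<Rightarrow> real \<Rightarrow> real \<Rightarrow> real \<Rightarrow> real" where
  "bcbf2 phi L delta k2 xm vm x v u =
     vm - v - (phi / L) * v\<^sup>2 - (phi / L) * x * u + k2 * b2 phi L delta xm x v"

definition bF2 :: "real \<Rightarrow> real \<Rightarrow> real \<Rightarrow> real \<Rightarrow> real \<Rightarrow> real \<Rightarrow> real \<Rightarrow> real \<Rightarrow> real \<Rightarrow> real" where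
  "bF2 phi L delta k2 umin xm vm x v =
     vm - v - (phi / L) * v\<^sup>2 + k2 * b2 phi L delta xm x v - (phi / L) * x * umin"

definition beta2 :: "real \<Rightarrow> real \<Rightarrow> real \<Rightarrow> real \<Rightarrow> real \<Rightarrow> real \<Rightarrow> real" where
  "beta2 phi L umin vm x v = vm - v - (phi / L) * v\<^sup>2 - (phi / L) * x * umin"

definition eta2 :: "real \<Rightarrow> real \<Rightarrow> real \<Rightarrow> real \<Rightarrow> real \<Rightarrow> real \<Rightarrow> real \<Rightarrow> real \<Rightarrow> real \<Rightarrow> real" where
  "eta2 phi L k2 umin um vm x v u =
     um - u - 2 * (phi / L) * v * u - (phi / L) * v * umin + k2 * beta2 phi L umin vm x v"

(* time derivatives along the dynamics (applied controls u, um) *)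
definition db2 :: "real \<Rightarrow> real \<Rightarrow> real \<Rightarrow> real \<Rightarrow> real \<Rightarrow> real \<Rightarrow> real" where
  "db2 phi L vm x v u = vm - v - (phi / L) * (v\<^sup>2 + x * u)"

definition dbF2 :: "real \<Rightarrow> real \<Rightarrow> real \<Rightarrow> real \<Rightarrow> real \<Rightarrow> real \<Rightarrow> real \<Rightarrow> real \<Rightarrow> real \<Rightarrow> real" where
  "dbF2 phi L k2 umin um vm x v u =
     um - u - 2 * (phi / L) * v * u + k2 * (vm - v - (phi / L) * (v\<^sup>2 + x * u))
     - (phi / L) * v * umin"

definition dbeta2 :: "real \<Rightarrow> real \<Rightarrow> real \<Rightarrow> real \<Rightarrow> real \<Rightarrow> real \<Rightarrow> real" where
  "dbeta2 phi L umin um v u = um - u - 2 * (phi / L) * v * u - (phi / L) * v * umin"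

definition QP12_con ::
  "real \<Rightarrow> real \<Rightarrow> real \<Rightarrow> real \<Rightarrow> real \<Rightarrow> real \<Rightarrow> real \<Rightarrow> real \<Rightarrow> real \<Rightarrow>
   real \<Rightarrow> real \<Rightarrow> real \<Rightarrow> real \<Rightarrow> real \<Rightarrow> real \<Rightarrow> real \<Rightarrow> real \<Rightarrow>
   real \<Rightarrow> real \<Rightarrow> bool" where
  "QP12_con phi L delta k1 k2 umin umax c1 c2 xp vp up xm vm um x v u e \<longleftrightarrow>
     bcbf1 phi delta k1 xp vp x v u \<ge> 0 \<and>
     bcbf2 phi L delta k2 xm vm x v u \<ge> 0 \<and>
     umin \<le> u \<and> u \<le> umax \<and>
     eta1 phi k1 umin up vp v u \<ge> 0 \<and>
     eta2 phi L k2 umin um vm x v u \<ge> 0 \<and>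
     c1 + c2 * u \<le> e"

definition QP12_feasible ::
  "real \<Rightarrow> real \<Rightarrow> real \<Rightarrow> real \<Rightarrow> real \<Rightarrow> real \<Rightarrow> real \<Rightarrow> real \<Rightarrow> real \<Rightarrow>
   real \<Rightarrow> real \<Rightarrow> real \<Rightarrow> real \<Rightarrow> real \<Rightarrow> real \<Rightarrow> real \<Rightarrow> real \<Rightarrow> bool" where
  "QP12_feasible phi L delta k1 k2 umin umax c1 c2 xp vp up xm vm um x v \<longleftrightarrow>
     (\<exists>u e. QP12_con phi L delta k1 k2 umin umax c1 c2 xp vp up xm vm um x v u e)"

end

theory Submission
  imports Defs
begin

text \<open>Whenever the six barrier functions b1, bF1, beta1, b2, bF2, beta2 are nonnegative, full
braking u = umin is a feasible point of QP12: the CBF constraints at umin are exactly bF1, bF2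
and the eta constraints reduce to beta1, beta2 plus terms made nonnegative by (A1), v \<ge> 0 and
umin \<le> 0.  Conversely any feasible u makes each barrier satisfy its first order CBF condition,
because the derivative condition for bF_j is eta_j + k_j bcbf_j.  By (SA) nonnegativity of the
six barriers therefore propagates from one sampling time to the next, starting from (A3), (A4).
The vehicle model and the hold of the control enter only through (SA).\<close>

definition QP12_invariant ::
  "real \<Rightarrow> real \<Rightarrow> real \<Rightarrow> real \<Rightarrow> real \<Rightarrow> real \<Rightarrow> real \<Rightarrow> real \<Rightarrow> real \<Rightarrow> real \<Rightarrow> real \<Rightarrow>
   real \<Rightarrow> bool" where
  "QP12_invariant phi L delta k1 k2 umin xp vp xm vm x v \<longleftrightarrow>
     b1 phi delta xp x v \<ge> 0 \<and> bF1 phi delta k1 umin xp vp x v \<ge> 0 \<and> beta1 phi umin vp v \<ge> 0 \<and>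
     b2 phi L delta xm x v \<ge> 0 \<and> bF2 phi L delta k2 umin xm vm x v \<ge> 0 \<and>
     beta2 phi L umin vm x v \<ge> 0"

lemma bcbf1_umin: "bcbf1 phi delta k1 xp vp x v umin = bF1 phi delta k1 umin xp vp x v"
  by (simp add: bcbf1_def bF1_def)

lemma bcbf2_umin: "bcbf2 phi L delta k2 xm vm x v umin = bF2 phi L delta k2 umin xm vm x v"
  by (simp add: bcbf2_def bF2_def)

lemma eta1_umin: "eta1 phi k1 umin up vp v umin = (up - umin) + k1 * beta1 phi umin vp v"
  by (simp add: eta1_def)

lemma eta2_umin:
  "eta2 phi L k2 umin um vm x v umin = (um - umin) - 3 * (phi / L) * v * umin + k2 * beta2 phi L umin vm x v"
  by (simp add: eta2_def algebra_simps)

lemma dbF1_add_bF1: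
  "dbF1 phi k1 up vp v u + k1 * bF1 phi delta k1 umin xp vp x v
     = eta1 phi k1 umin up vp v u + k1 * bcbf1 phi delta k1 xp vp x v u"
  by (simp add: dbF1_def bF1_def eta1_def bcbf1_def beta1_def algebra_simps)

lemma dbF2_add_bF2:
  "dbF2 phi L k2 umin um vm x v u + k2 * bF2 phi L delta k2 umin xm vm x v
     = eta2 phi L k2 umin um vm x v u + k2 * bcbf2 phi L delta k2 xm vm x v u"
  by (simp add: dbF2_def bF2_def eta2_def bcbf2_def beta2_def algebra_simps)

lemma QP12_feasible_if_invariant:
  assumes "phi \<ge> 0" "L > 0" "k1 \<ge> 0" "k2 \<ge> 0" "umin \<le> 0" "umin \<le> umax" "v \<ge> 0"
    and "up \<ge> umin" "um \<ge> umin"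
    and inv: "QP12_invariant phi L delta k1 k2 umin xp vp xm vm x v"
  shows "QP12_feasible phi L delta k1 k2 umin umax c1 c2 xp vp up xm vm um x v"
proof -
  have "(phi / L) * v \<ge> 0"
    using assms(1,2,7) by simp
  then have "(phi / L) * v * umin \<le> 0"
    using assms(5) by (rule mult_nonneg_nonpos)
  then have "eta2 phi L k2 umin um vm x v umin \<ge> 0"
    using assms(4,9) inv by (simp add: eta2_umin QP12_invariant_def)
  moreover have "eta1 phi k1 umin up vp v umin \<ge> 0"
    using assms(3,8) inv by (simp add: eta1_umin QP12_invariant_def)
  ultimately have "QP12_con phi L delta k1 k2 umin umax c1 c2 xp vp up xm vm um x v umin (c1 + c2 * umin)"
    using assms(6) inv by (simp add: QP12_con_def bcbf1_umin bcbf2_umin QP12_invariant_def)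
  then show ?thesis
    unfolding QP12_feasible_def by blast
qed

lemma QP12_con_cbf_conditions:
  assumes con: "QP12_con phi L delta k1 k2 umin umax c1 c2 xp vp up xm vm um x v u e"
    and "k1 \<ge> 0" "k2 \<ge> 0"
  shows "db1 phi vp v u + k1 * b1 phi delta xp x v \<ge> 0"
    and "dbF1 phi k1 up vp v u + k1 * bF1 phi delta k1 umin xp vp x v \<ge> 0"
    and "dbeta1 up u + k1 * beta1 phi umin vp v \<ge> 0"
    and "db2 phi L vm x v u + k2 * b2 phi L delta xm x v \<ge> 0"
    and "dbF2 phi L k2 umin um vm x v u + k2 * bF2 phi L delta k2 umin xm vm x v \<ge> 0"
    and "dbeta2 phi L umin um v u + k2 * beta2 phi L umin vm x v \<ge> 0"
proof -
  have cbf: "bcbf1 phi delta k1 xp vp x v u \<ge> 0" "bcbf2 phi L delta k2 xm vm x v u \<ge> 0"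
    and eta: "eta1 phi k1 umin up vp v u \<ge> 0" "eta2 phi L k2 umin um vm x v u \<ge> 0"
    using con by (auto simp: QP12_con_def)
  show "db1 phi vp v u + k1 * b1 phi delta xp x v \<ge> 0"
    using cbf(1) by (simp add: db1_def bcbf1_def)
  show "dbF1 phi k1 up vp v u + k1 * bF1 phi delta k1 umin xp vp x v \<ge> 0"
    using cbf(1) eta(1) assms(2) by (simp add: dbF1_add_bF1)
  show "dbeta1 up u + k1 * beta1 phi umin vp v \<ge> 0"
    using eta(1) by (simp add: dbeta1_def eta1_def)
  show "db2 phi L vm x v u + k2 * b2 phi L delta xm x v \<ge> 0"
    using cbf(2) by (simp add: db2_def bcbf2_def algebra_simps)
  show "dbF2 phi L k2 umin um vm x v u + k2 * bF2 phi L delta k2 umin xm vm x v \<ge> 0"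
    using cbf(2) eta(2) assms(3) by (simp add: dbF2_add_bF2)
  show "dbeta2 phi L umin um v u + k2 * beta2 phi L umin vm x v \<ge> 0"
    using eta(2) by (simp add: dbeta2_def eta2_def)
qed

lemma sampled_invariant_induct:
  fixes P :: "real \<Rightarrow> bool" and k :: nat
  assumes "dt > 0" and "P t0"
    and step: "\<And>k::nat. {t0 + real k * dt .. t0 + (real k + 1) * dt} \<subseteq> {t0..tm} \<Longrightarrow>
        P (t0 + real k * dt) \<Longrightarrow> P (t0 + real k * dt + dt)"
    and "{t0 + real k * dt .. t0 + (real k + 1) * dt} \<subseteq> {t0..tm}"
  shows "P (t0 + real k * dt)"
  using assms(4)
proof (induction k)
  case 0
  then show ?case using \<open>P t0\<close> by simp
next
  case (Suc k)
  have "t0 + (real (Suc k) + 1) * dt \<le> tm"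
    using Suc.prems \<open>dt > 0\<close> by auto
  then have interval: "{t0 + real k * dt .. t0 + (real k + 1) * dt} \<subseteq> {t0..tm}"
    using \<open>dt > 0\<close> by (auto simp: algebra_simps)
  have "P (t0 + real k * dt + dt)"
    using step[OF interval] Suc.IH[OF interval] .
  then show ?case by (simp add: algebra_simps)
qed

theorem theorem6:
  fixes phi delta k1 k2 L umin umax t0 tm dt :: real
    and x v u xp vp up xm vm um c1 c2 :: "real \<Rightarrow> real"
  assumes phi_pos: "phi > 0" and k1_pos: "k1 > 0" and k2_pos: "k2 > 0" and L_pos: "L > 0"
    and bounds: "umin < 0" "0 < umax" and umin_nonpos: "umin \<le> 0"
    and dt_pos: "dt > 0" and t0_tm: "t0 \<le> tm"
    \<comment> \<open>vehicle model (right derivatives: controls are piecewise constant)\<close>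
    and dyn: "\<And>t. t \<in> {t0..tm} \<Longrightarrow>
         (x has_real_derivative v t) (at t within {t..}) \<and>
         (v has_real_derivative u t) (at t within {t..}) \<and>
         (xp has_real_derivative vp t) (at t within {t..}) \<and>
         (vp has_real_derivative up t) (at t within {t..}) \<and>
         (xm has_real_derivative vm t) (at t within {t..}) \<and>
         (vm has_real_derivative um t) (at t within {t..})"
    and x_range: "\<And>t. t \<in> {t0..tm} \<Longrightarrow> 0 \<le> x t \<and> x t \<le> L"
    and x_enter: "x t0 = 0" and x_merge: "x tm = L"
    \<comment> \<open>(A1)\<close>
    and A1: "\<And>t. up t \<ge> umin \<and> um t \<ge> umin"
    \<comment> \<open>nonnegative speed at all times\<close>
    and v_nonneg: "\<And>t. v t \<ge> 0"
    \<comment> \<open>zero-order hold of the control on each sampling interval\<close>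
    and hold: "\<And>(k::nat) s. 0 \<le> s \<Longrightarrow> s < dt \<Longrightarrow>
         u (t0 + real k * dt + s) = u (t0 + real k * dt)"
    \<comment> \<open>(SA)\<close>
    and SA: "\<And>k::nat. {t0 + real k * dt .. t0 + (real k + 1) * dt} \<subseteq> {t0..tm} \<Longrightarrow>
       (let t = t0 + real k * dt; t' = t + dt in
         (b1 phi delta (xp t) (x t) (v t) \<ge> 0 \<and>
            db1 phi (vp t) (v t) (u t) + k1 * b1 phi delta (xp t) (x t) (v t) \<ge> 0
            \<longrightarrow> b1 phi delta (xp t') (x t') (v t') \<ge> 0) \<and>
         (bF1 phi delta k1 umin (xp t) (vp t) (x t) (v t) \<ge> 0 \<and>
            dbF1 phi k1 (up t) (vp t) (v t) (u t)
              + k1 * bF1 phi delta k1 umin (xp t) (vp t) (x t) (v t) \<ge> 0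
            \<longrightarrow> bF1 phi delta k1 umin (xp t') (vp t') (x t') (v t') \<ge> 0) \<and>
         (beta1 phi umin (vp t) (v t) \<ge> 0 \<and>
            dbeta1 (up t) (u t) + k1 * beta1 phi umin (vp t) (v t) \<ge> 0
            \<longrightarrow> beta1 phi umin (vp t') (v t') \<ge> 0) \<and>
         (b2 phi L delta (xm t) (x t) (v t) \<ge> 0 \<and>
            db2 phi L (vm t) (x t) (v t) (u t) + k2 * b2 phi L delta (xm t) (x t) (v t) \<ge> 0
            \<longrightarrow> b2 phi L delta (xm t') (x t') (v t') \<ge> 0) \<and>
         (bF2 phi L delta k2 umin (xm t) (vm t) (x t) (v t) \<ge> 0 \<and>
            dbF2 phi L k2 umin (um t) (vm t) (x t) (v t) (u t)
              + k2 * bF2 phi L delta k2 umin (xm t) (vm t) (x t) (v t) \<ge> 0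
            \<longrightarrow> bF2 phi L delta k2 umin (xm t') (vm t') (x t') (v t') \<ge> 0) \<and>
         (beta2 phi L umin (vm t) (x t) (v t) \<ge> 0 \<and>
            dbeta2 phi L umin (um t) (v t) (u t) + k2 * beta2 phi L umin (vm t) (x t) (v t) \<ge> 0
            \<longrightarrow> beta2 phi L umin (vm t') (x t') (v t') \<ge> 0))"
    \<comment> \<open>(A3)\<close>
    and A3: "b1 phi delta (xp t0) (x t0) (v t0) \<ge> 0"
            "bF1 phi delta k1 umin (xp t0) (vp t0) (x t0) (v t0) \<ge> 0"
            "beta1 phi umin (vp t0) (v t0) \<ge> 0"
    \<comment> \<open>(A4)\<close>
    and A4: "b2 phi L delta (xm t0) (x t0) (v t0) \<ge> 0"
            "bF2 phi L delta k2 umin (xm t0) (vm t0) (x t0) (v t0) \<ge> 0"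
            "beta2 phi L umin (vm t0) (x t0) (v t0) \<ge> 0"
    \<comment> \<open>applied control is a feasible point of QP12 whenever QP12 is feasible\<close>
    and applied: "\<And>k::nat. let t = t0 + real k * dt in
       QP12_feasible phi L delta k1 k2 umin umax (c1 t) (c2 t) (xp t) (vp t) (up t)
                     (xm t) (vm t) (um t) (x t) (v t) \<longrightarrow>
       (\<exists>e. QP12_con phi L delta k1 k2 umin umax (c1 t) (c2 t) (xp t) (vp t) (up t)
                     (xm t) (vm t) (um t) (x t) (v t) (u t) e)"
  shows "\<forall>k::nat. {t0 + real k * dt .. t0 + (real k + 1) * dt} \<subseteq> {t0..tm} \<longrightarrow>
     (let t = t0 + real k * dt in
       QP12_feasible phi L delta k1 k2 umin umax (c1 t) (c2 t) (xp t) (vp t) (up t)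
                     (xm t) (vm t) (um t) (x t) (v t))"
proof -
  let ?inv = "\<lambda>t. QP12_invariant phi L delta k1 k2 umin (xp t) (vp t) (xm t) (vm t) (x t) (v t)"
  have feasible: "QP12_feasible phi L delta k1 k2 umin umax (c1 t) (c2 t) (xp t) (vp t) (up t)
                     (xm t) (vm t) (um t) (x t) (v t)" if "?inv t" for t
    using QP12_feasible_if_invariant that A1[of t] v_nonneg[of t] bounds phi_pos L_pos k1_pos k2_pos
    by simp
  have "?inv (t0 + real k * dt)"
    if "{t0 + real k * dt .. t0 + (real k + 1) * dt} \<subseteq> {t0..tm}" for k :: nat
  proof (rule sampled_invariant_induct[OF dt_pos _ _ that])
    show "?inv t0"
      using A3 A4 by (simp add: QP12_invariant_def)
  next
    fix j :: nat
    assume interval: "{t0 + real j * dt .. t0 + (real j + 1) * dt} \<subseteq> {t0..tm}"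
      and inv: "?inv (t0 + real j * dt)"
    define t where "t = t0 + real j * dt"
    obtain e where "QP12_con phi L delta k1 k2 umin umax (c1 t) (c2 t) (xp t) (vp t) (up t)
        (xm t) (vm t) (um t) (x t) (v t) (u t) e"
      using applied[of j] feasible[OF inv] by (auto simp: t_def Let_def)
    from QP12_con_cbf_conditions[OF this] k1_pos k2_pos SA[OF interval] inv
    show "?inv (t0 + real j * dt + dt)"
      by (simp add: t_def QP12_invariant_def Let_def)
  qed
  then show ?thesis
    using feasible by (simp add: Let_def)
qed

end
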